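(* Let $K\subset\mathbb{R}^n$ be a proper cone and $\mathcal{M}\subset\mathbb{R}^{n\times n}$ compact and nonempty. (i) If $\mathcal{S}=\mathcal{S}(\mathcal{M},\mathbb{N})\subset\pi(K)$, then $\mathcal{S}$ is $K$-irreducible if and only if $\operatorname{conv}\mathcal{M}$ contains a $K$-irreducible element. (ii) If $\mathcal{S}=\mathcal{S}(\mathcal{M},\mathbb{R}_+)\subset\pi(K)$, then $\mathcal{S}$ is $K$-irreducible if and only if for every nontrivial face $F$ of $K$ there exists $A\in\mathcal{M}$ with $A\,\operatorname{span}F\not\subset\operatorname{span}F$. If moreover $\mathcal{M}\subset\pi(K)+\Lambda$ with $\Lambda=\{\lambda I:\lambda\in\mathbb{R}\}$, this is equivalent to the existence of an irreducible exponentially $K$-nonnegative matrix $A\in\operatorname{conv}\mathcal{M}$ (i.e. one for which no nontrivial face $F$ has $A\,\operatorname{span}F\subset\operatorname{span}F$).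
   Context: A proper cone $K\subset\mathbb{R}^n$ is a nonempty set with $rK\subset K$ for all $r>0$ which is convex, pointed, closed and has nonempty interior. Write $x\ge_K y$ if $x-y\in K$. A face of $K$ is a cone $F\subseteq K$ such that $x\in F$ and $x\ge_K y\ge_K0$ imply $y\in F$; $\{0\}$ and $K$ are the trivial faces. $\pi(K)=\{A: AK\subset K\}$; $A\in\pi(K)$ is $K$-irreducible if no nontrivial face $F$ satisfies $AF\subset F$. A matrix $A$ is exponentially $K$-nonnegative if $e^{At}K\subset K$ for all $t\ge0$. Discrete semigroup $\mathcal{S}(\mathcal{M},\mathbb{N})=\bigcup_{t\in\mathbb{N}}\mathcal{S}_t$ with $\mathcal{S}_0=\{I\}$ and $\mathcal{S}_t=\{A_{t-1}\cdots A_0: A_s\in\mathcal{M}\}$. Continuous semigroup $\mathcal{S}(\mathcal{M},\mathbb{R}_+)=\bigcup_{t\ge0}\mathcal{S}_t$ with $\mathcal{S}_0=\{I\}$ and $\mathcal{S}_t=\{\Phi_\sigma(t):\sigma:[0,t]\to\mathcal{M}\text{ measurable}\}$, where $\dot\Phi_\sigma(s)=\sigma(s)\Phi_\sigma(s)$, $\Phi_\sigma(0)=I$. A semigroup $\mathcal{S}=\bigcup_t\mathcal{S}_t\subset\pi(K)$ is called $K$-irreducible if there exists $t>0$ such that $\operatorname{conv}\mathcal{S}_t$ contains a $K$-irreducible element. *)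

theory Defs
  imports "HOL-Analysis.Analysis"
begin

type_synonym 'n mat = "real ^ 'n ^ 'n"

definition proper_cone :: "(real ^ 'n) set \<Rightarrow> bool" where
  "proper_cone K \<longleftrightarrow> K \<noteq> {} \<and> (\<forall>r>0. \<forall>x\<in>K. r *\<^sub>R x \<in> K) \<and> convex K
     \<and> (\<forall>x. x \<in> K \<and> - x \<in> K \<longrightarrow> x = 0) \<and> closed K \<and> interior K \<noteq> {}"

definition cone_ge :: "(real ^ 'n) set \<Rightarrow> real ^ 'n \<Rightarrow> real ^ 'n \<Rightarrow> bool" where
  "cone_ge K x y \<longleftrightarrow> x - y \<in> K"

definition cone_face :: "(real ^ 'n) set \<Rightarrow> (real ^ 'n) set \<Rightarrow> bool" where
  "cone_face K F \<longleftrightarrow> F \<noteq> {} \<and> F \<subseteq> K \<and> (\<forall>r>0. \<forall>x\<in>F. r *\<^sub>R x \<in> F) \<and> convex F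
     \<and> (\<forall>x y. x \<in> F \<and> cone_ge K x y \<and> cone_ge K y 0 \<longrightarrow> y \<in> F)"

definition nontrivial_face :: "(real ^ 'n) set \<Rightarrow> (real ^ 'n) set \<Rightarrow> bool" where
  "nontrivial_face K F \<longleftrightarrow> cone_face K F \<and> F \<noteq> {0} \<and> F \<noteq> K"

definition pi_cone :: "(real ^ ('n::finite)) set \<Rightarrow> 'n mat set" where
  "pi_cone K = {A. \<forall>x\<in>K. A *v x \<in> K}"

definition K_irreducible :: "(real ^ ('n::finite)) set \<Rightarrow> 'n mat \<Rightarrow> bool" where
  "K_irreducible K A \<longleftrightarrow> A \<in> pi_cone K \<and>
     \<not> (\<exists>F. nontrivial_face K F \<and> (\<lambda>x. A *v x) ` F \<subseteq> F)"

primrec mpow :: "('n::finite) mat \<Rightarrow> nat \<Rightarrow> 'n mat" where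
  "mpow A 0 = mat 1"
| "mpow A (Suc k) = A ** mpow A k"

definition mexp :: "('n::finite) mat \<Rightarrow> 'n mat" where
  "mexp A = (\<Sum>k. (1 / fact k) *\<^sub>R mpow A k)"

definition exp_K_nonneg :: "(real ^ 'n) set \<Rightarrow> ('n::finite) mat \<Rightarrow> bool" where
  "exp_K_nonneg K A \<longleftrightarrow> (\<forall>t\<ge>0. \<forall>x\<in>K. mexp (t *\<^sub>R A) *v x \<in> K)"

primrec dsg_step :: "('n::finite) mat set \<Rightarrow> nat \<Rightarrow> 'n mat set" where
  "dsg_step M 0 = {mat 1}"
| "dsg_step M (Suc t) = {A ** B | A B. A \<in> M \<and> B \<in> dsg_step M t}"

definition dsg :: "('n::finite) mat set \<Rightarrow> 'n mat set" where
  "dsg M = (\<Union>t. dsg_step M t)"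

definition dsg_irreducible :: "(real ^ ('n::finite)) set \<Rightarrow> 'n mat set \<Rightarrow> bool" where
  "dsg_irreducible K M \<longleftrightarrow> (\<exists>t::nat>0. \<exists>A\<in>convex hull (dsg_step M t). K_irreducible K A)"

(* continuous semigroup: S_t = {\<Phi>_\<sigma>(t)}, \<sigma> : [0,t] \<rightarrow> M measurable, and \<Phi>_\<sigma> the
   (Caratheodory, i.e. absolutely continuous) solution of \<Phi>' = \<sigma> \<Phi>, \<Phi>(0) = I,
   written in integral form \<Phi>(s) = I + \<integral>_0^s \<sigma>(r) \<Phi>(r) dr *)
definition csg_step :: "('n::finite) mat set \<Rightarrow> real \<Rightarrow> 'n mat set" where
  "csg_step M t = {\<Phi> t | \<sigma> \<Phi>. \<sigma> measurable_on {0..t} \<and> (\<forall>s\<in>{0..t}. \<sigma> s \<in> M)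
       \<and> continuous_on {0..t} \<Phi>
       \<and> (\<forall>s\<in>{0..t}. ((\<lambda>r. \<sigma> r ** \<Phi> r) has_integral (\<Phi> s - mat 1)) {0..s})}"

definition csg :: "('n::finite) mat set \<Rightarrow> 'n mat set" where
  "csg M = (\<Union>t\<in>{0..}. csg_step M t)"

definition csg_irreducible :: "(real ^ 'n) set \<Rightarrow> ('n::finite) mat set \<Rightarrow> bool" where
  "csg_irreducible K M \<longleftrightarrow> (\<exists>t>0. \<exists>A\<in>convex hull (csg_step M t). K_irreducible K A)"

end

theory Submission
  imports Defs "HOL-Computational_Algebra.Formal_Power_Series"
begin

text \<open>
  Everything rests on one observation about a convex set \<open>T\<close> of matrices contained in
  \<open>\<pi>(K) + \<Lambda>\<close>: if a relative interior point \<open>A\<^sub>0\<close> of \<open>T\<close> leaves \<open>span F\<close> invariant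
  for a face \<open>F\<close>, then so does every \<open>B \<in> T\<close>. Indeed \<open>A\<^sub>0 = l B + (1 - l) C\<close> with
  \<open>0 < l < 1\<close> and \<open>C \<in> T\<close>; after removing the scalar parts, a positive combination of two
  elements of \<open>\<pi>(K)\<close> maps \<open>F\<close> into \<open>F\<close>, and since \<open>F\<close> is a face, each summand does. Hence
  the convex hull of a set \<open>S \<subseteq> \<pi>(K)\<close> contains a \<open>K\<close>-irreducible matrix iff no nontrivial
  face is invariant under all of \<open>S\<close>.

  For the discrete semigroup, a face invariant under \<open>M\<close> is invariant under all products.
  For the continuous one, if every \<open>A \<in> M\<close> leaves \<open>span F\<close> invariant, then by Gronwall's
  lemma so does every solution of \<open>\<Phi>' = \<sigma> \<Phi>\<close>, \<open>\<Phi>(0) = I\<close>. Conversely \<open>exp(tC) \<in> S\<^sub>t\<close>,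
  and for \<open>\<parallel>tC\<parallel> \<le> 1/4\<close> the matrix \<open>tC\<close> lies in every closed subalgebra containing
  \<open>exp(tC)\<close>: the iterated square roots \<open>exp(tC/2\<^sup>j)\<close> are binomial series, and
  \<open>2\<^sup>j (exp(tC/2\<^sup>j) - I) \<rightarrow> tC\<close>. Finally, the elements of \<open>\<pi>(K) + \<Lambda>\<close> are exponentially
  \<open>K\<close>-nonnegative because \<open>exp(B)\<close> is a limit of polynomials in \<open>B\<close> with nonnegative
  coefficients.
\<close>

section \<open>Linear operators as a Banach algebra\<close>

text \<open>Bounded linear endomorphisms with composition as product, so that the exponential
  of a Banach algebra becomes available for matrices.\<close>

typedef (overloaded) 'a blinop = "UNIV :: ('a::euclidean_space \<Rightarrow>\<^sub>L 'a) set"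
  morphisms blinfun_of_blinop Blinop by auto

setup_lifting type_definition_blinop

instantiation blinop :: (euclidean_space) real_normed_vector
begin
lift_definition norm_blinop :: "'a blinop \<Rightarrow> real" is norm .
lift_definition minus_blinop :: "'a blinop \<Rightarrow> 'a blinop \<Rightarrow> 'a blinop" is "(-)" .
lift_definition plus_blinop :: "'a blinop \<Rightarrow> 'a blinop \<Rightarrow> 'a blinop" is "(+)" .
lift_definition uminus_blinop :: "'a blinop \<Rightarrow> 'a blinop" is "uminus" .
lift_definition zero_blinop :: "'a blinop" is "0" .
lift_definition scaleR_blinop :: "real \<Rightarrow> 'a blinop \<Rightarrow> 'a blinop" is "scaleR" .
definition dist_blinop :: "'a blinop \<Rightarrow> 'a blinop \<Rightarrow> real"
  where "dist_blinop a b = norm (a - b)"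
definition uniformity_blinop :: "('a blinop \<times> 'a blinop) filter"
  where "uniformity_blinop = (INF e\<in>{0 <..}. principal {(x, y). dist x y < e})"
definition open_blinop :: "'a blinop set \<Rightarrow> bool"
  where "open_blinop S = (\<forall>x\<in>S. \<forall>\<^sub>F (x', y) in uniformity. x' = x \<longrightarrow> y \<in> S)"
definition sgn_blinop :: "'a blinop \<Rightarrow> 'a blinop"
  where "sgn_blinop x = scaleR (inverse (norm x)) x"
instance
  by standard
    (unfold dist_blinop_def open_blinop_def sgn_blinop_def uniformity_blinop_def,
     (rule refl | (transfer, force simp: norm_triangle_ineq algebra_simps))+)
end

instantiation blinop :: (euclidean_space) ring_1
begin
lift_definition times_blinop :: "'a blinop \<Rightarrow> 'a blinop \<Rightarrow> 'a blinop" is "(o\<^sub>L)" .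
lift_definition one_blinop :: "'a blinop" is "id_blinfun" .
instance
proof
  fix a b c :: "'a blinop"
  show "a * b * c = a * (b * c)" by transfer (auto intro!: blinfun_eqI)
  show "1 * a = a" by transfer (auto intro!: blinfun_eqI)
  show "a * 1 = a" by transfer (auto intro!: blinfun_eqI)
  show "(a + b) * c = a * c + b * c"
    by transfer (auto intro!: blinfun_eqI simp: blinfun.bilinear_simps)
  show "a * (b + c) = a * b + a * c"
    by transfer (auto intro!: blinfun_eqI simp: blinfun.bilinear_simps)
  show "(0::'a blinop) \<noteq> 1"
  proof transfer
    obtain v :: 'a where "v \<noteq> 0" using nonzero_Basis SOME_Basis by blast
    then show "(0::'a \<Rightarrow>\<^sub>L 'a) \<noteq> id_blinfun"
      by (metis blinfun_apply_id_blinfun zero_blinfun.rep_eq)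
  qed
qed
end

instance blinop :: (euclidean_space) real_normed_algebra_1
proof
  fix a b :: "'a blinop" and r :: real
  show "r *\<^sub>R a * b = r *\<^sub>R (a * b)"
    by transfer (auto intro!: blinfun_eqI simp: blinfun.bilinear_simps)
  show "a * r *\<^sub>R b = r *\<^sub>R (a * b)"
    by transfer (auto intro!: blinfun_eqI simp: blinfun.bilinear_simps)
  show "norm (a * b) \<le> norm a * norm b" by transfer (rule norm_blinfun_compose)
  show "norm (1::'a blinop) = 1" by transfer simp
qed

lemma dist_blinop_eq: "dist x y = dist (blinfun_of_blinop x) (blinfun_of_blinop y)"
  unfolding dist_blinop_def dist_norm by transfer simp

instance blinop :: (euclidean_space) banach
proof
  fix X :: "nat \<Rightarrow> 'a blinop"
  assume "Cauchy X"
  then have "Cauchy (\<lambda>n. blinfun_of_blinop (X n))"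
    unfolding Cauchy_def dist_blinop_eq by simp
  then obtain L where "(\<lambda>n. blinfun_of_blinop (X n)) \<longlonglongrightarrow> L"
    using Cauchy_convergent_iff convergent_def by blast
  then have "X \<longlonglongrightarrow> Blinop L"
    unfolding lim_sequentially dist_blinop_eq by (simp add: Blinop_inverse)
  then show "convergent X" by (auto simp: convergent_def)
qed

definition blinop_apply :: "'a::euclidean_space blinop \<Rightarrow> 'a \<Rightarrow> 'a" where
  "blinop_apply L = blinfun_apply (blinfun_of_blinop L)"

lemma blinop_apply_mult [simp]: "blinop_apply (x * y) v = blinop_apply x (blinop_apply y v)"
  by (simp add: blinop_apply_def times_blinop.rep_eq)

lemma blinop_apply_one [simp]: "blinop_apply 1 v = v"
  by (simp add: blinop_apply_def one_blinop.rep_eq)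

lemma blinop_apply_zero [simp]: "blinop_apply 0 v = 0"
  by (simp add: blinop_apply_def zero_blinop.rep_eq)

lemma blinop_apply_add [simp]: "blinop_apply (x + y) v = blinop_apply x v + blinop_apply y v"
  by (simp add: blinop_apply_def plus_blinop.rep_eq blinfun.bilinear_simps)

lemma blinop_apply_diff [simp]: "blinop_apply (x - y) v = blinop_apply x v - blinop_apply y v"
  by (simp add: blinop_apply_def minus_blinop.rep_eq blinfun.bilinear_simps)

lemma blinop_apply_scaleR [simp]: "blinop_apply (r *\<^sub>R x) v = r *\<^sub>R blinop_apply x v"
  by (simp add: blinop_apply_def scaleR_blinop.rep_eq blinfun.bilinear_simps)

lemma linear_blinop_apply: "linear (blinop_apply L)"
  unfolding blinop_apply_def by (rule bounded_linear.linear[OF blinfun.bounded_linear_right])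

lemma norm_blinop_apply_le: "norm (blinop_apply L v) \<le> norm L * norm v"
  unfolding blinop_apply_def norm_blinop.rep_eq by (rule norm_blinfun)

lemma blinop_eqI: "(\<And>v. blinop_apply x v = blinop_apply y v) \<Longrightarrow> x = y"
  unfolding blinop_apply_def by (metis blinfun_eqI blinfun_of_blinop_inject)

lemma bounded_linear_blinop_apply_left: "bounded_linear (\<lambda>L. blinop_apply L v)"
  by (rule bounded_linear_intro[where K="norm v"]) (simp_all add: norm_blinop_apply_le)

section \<open>Matrices as operators\<close>

definition blinop_of_matrix :: "real^'n^'n \<Rightarrow> (real^'n::finite) blinop" where
  "blinop_of_matrix A = Blinop (Blinfun (\<lambda>v. A *v v))"

definition matrix_of_blinop :: "(real^'n::finite) blinop \<Rightarrow> real^'n^'n" where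
  "matrix_of_blinop L = matrix (blinop_apply L)"

lemma blinop_apply_of_matrix [simp]: "blinop_apply (blinop_of_matrix A) v = A *v v"
  unfolding blinop_apply_def blinop_of_matrix_def
  by (simp add: Blinop_inverse bounded_linear_Blinfun_apply linear_conv_bounded_linear)

lemma matrix_of_blinop_mult_vector: "matrix_of_blinop L *v v = blinop_apply L v"
  unfolding matrix_of_blinop_def
  using linear_blinop_apply[of L] by (simp add: matrix_works linear_matrix_vector_mul_eq)

lemma matrix_of_blinop_of_matrix [simp]: "matrix_of_blinop (blinop_of_matrix A) = A"
proof -
  have "blinop_apply (blinop_of_matrix A) = (\<lambda>v. A *v v)" by (rule ext) simp
  then show ?thesis unfolding matrix_of_blinop_def by simp
qed

lemma blinop_of_matrix_of_blinop [simp]: "blinop_of_matrix (matrix_of_blinop L) = L"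
  by (rule blinop_eqI) (simp add: matrix_of_blinop_mult_vector)

lemma blinop_of_matrix_mult: "blinop_of_matrix (A ** B) = blinop_of_matrix A * blinop_of_matrix B"
  by (rule blinop_eqI) (simp add: matrix_vector_mul_assoc)

lemma blinop_of_matrix_one: "blinop_of_matrix (mat 1) = 1"
  by (rule blinop_eqI) simp

lemma blinop_of_matrix_add: "blinop_of_matrix (A + B) = blinop_of_matrix A + blinop_of_matrix B"
  by (rule blinop_eqI) (simp add: matrix_vector_mult_add_rdistrib)

lemma blinop_of_matrix_scaleR: "blinop_of_matrix (r *\<^sub>R A) = r *\<^sub>R blinop_of_matrix A"
  by (rule blinop_eqI) (simp add: scaleR_matrix_vector_assoc)

lemma matrix_of_blinop_mult: "matrix_of_blinop (x * y) = matrix_of_blinop x ** matrix_of_blinop y"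
  by (metis blinop_of_matrix_mult blinop_of_matrix_of_blinop matrix_of_blinop_of_matrix)

lemma matrix_of_blinop_scaleR: "matrix_of_blinop (r *\<^sub>R x) = r *\<^sub>R matrix_of_blinop x"
  by (metis blinop_of_matrix_scaleR blinop_of_matrix_of_blinop matrix_of_blinop_of_matrix)

lemma bounded_linear_blinop_of_matrix:
  "bounded_linear (blinop_of_matrix :: real^'n^'n \<Rightarrow> (real^'n::finite) blinop)"
  unfolding linear_conv_bounded_linear[symmetric]
  by (rule linearI) (simp_all add: blinop_of_matrix_add blinop_of_matrix_scaleR)

lemma bounded_linear_matrix_of_blinop:
  "bounded_linear (matrix_of_blinop :: (real^'n::finite) blinop \<Rightarrow> real^'n^'n)"
proof (rule bounded_linear_intro[where K="real CARD('n) * real CARD('n)"])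
  show "matrix_of_blinop (x + y) = matrix_of_blinop x + matrix_of_blinop y" for x y
    by (metis blinop_of_matrix_add blinop_of_matrix_of_blinop matrix_of_blinop_of_matrix)
  show "matrix_of_blinop (r *\<^sub>R x) = r *\<^sub>R matrix_of_blinop x" for r x
    by (rule matrix_of_blinop_scaleR)
  fix x :: "(real^'n) blinop"
  have entry: "\<bar>matrix_of_blinop x $ i $ j\<bar> \<le> norm x" for i j
  proof -
    have "\<bar>matrix_of_blinop x $ i $ j\<bar> \<le> norm (blinop_apply x (axis j 1))"
      unfolding matrix_of_blinop_def matrix_def by (simp add: component_le_norm_cart)
    also have "\<dots> \<le> norm x" using norm_blinop_apply_le[of x "axis j (1::real)"] by simp
    finally show ?thesis .
  qed
  have "norm (matrix_of_blinop x) \<le> (\<Sum>i\<in>UNIV. norm (matrix_of_blinop x $ i))"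
    by (simp add: norm_vec_def L2_set_le_sum)
  also have "\<dots> \<le> (\<Sum>i\<in>(UNIV::'n set). \<Sum>j\<in>(UNIV::'n set). norm x)"
    by (intro sum_mono order_trans[OF norm_le_l1_cart] entry)
  also have "\<dots> = norm x * (real CARD('n) * real CARD('n))" by simp
  finally show "norm (matrix_of_blinop x) \<le> norm x * (real CARD('n) * real CARD('n))" .
qed

lemma blinop_of_matrix_mpow: "blinop_of_matrix (mpow A k) = blinop_of_matrix A ^ k"
  by (induction k) (simp_all add: blinop_of_matrix_one blinop_of_matrix_mult)

lemma mexp_eq_exp: "mexp A = matrix_of_blinop (exp (blinop_of_matrix A))"
proof -
  have "(\<lambda>k. (1 / fact k) *\<^sub>R blinop_of_matrix A ^ k) sums exp (blinop_of_matrix A)"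
    using exp_converges[of "blinop_of_matrix A"] by (simp add: divide_inverse_commute)
  from bounded_linear.sums[OF bounded_linear_matrix_of_blinop this]
  have "(\<lambda>k. (1 / fact k) *\<^sub>R mpow A k) sums matrix_of_blinop (exp (blinop_of_matrix A))"
    by (simp add: matrix_of_blinop_scaleR flip: blinop_of_matrix_mpow)
  then show ?thesis unfolding mexp_def by (rule sums_unique[symmetric])
qed

lemma mexp_mult_vector: "mexp A *v v = blinop_apply (exp (blinop_of_matrix A)) v"
  by (simp add: mexp_eq_exp matrix_of_blinop_mult_vector)

lemma mexp_zero: "mexp (0::real^'n::finite^'n) = mat 1"
  by (metis mexp_eq_exp blinop_of_matrix_one matrix_of_blinop_of_matrix exp_zero
      scaleR_zero_left blinop_of_matrix_scaleR)

lemma has_vector_derivative_mexp: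
  "((\<lambda>s. mexp (s *\<^sub>R C)) has_vector_derivative C ** mexp (s *\<^sub>R C)) (at s within T)"
proof -
  let ?C = "blinop_of_matrix C"
  have "((\<lambda>s. exp (s *\<^sub>R ?C)) has_derivative (\<lambda>h. h *\<^sub>R (?C * exp (s *\<^sub>R ?C)))) (at s within T)"
    using has_vector_derivative_at_within[OF exp_scaleR_has_vector_derivative_left]
    by (simp add: has_vector_derivative_def)
  from bounded_linear.has_derivative[OF bounded_linear_matrix_of_blinop this]
  show ?thesis
    by (simp add: has_vector_derivative_def mexp_eq_exp blinop_of_matrix_scaleR
        matrix_of_blinop_scaleR matrix_of_blinop_mult)
qed

lemma bounded_matrices_operator_norm_bound:
  assumes "bounded (M :: (real^'n::finite^'n) set)"
  obtains L where "L > 0" "\<And>C. C \<in> M \<Longrightarrow> norm (blinop_of_matrix C) \<le> L"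
  using bounded_linear_image[OF assms bounded_linear_blinop_of_matrix]
  unfolding bounded_pos by blast

section \<open>Exponentials in Banach algebras\<close>

lemma exp_add_scaleR_one:
  fixes B :: "'a::{real_normed_algebra_1,banach}"
  shows "exp (B + c *\<^sub>R 1) = exp c *\<^sub>R exp B"
proof -
  have "exp (B + c *\<^sub>R 1) = exp B * exp (c *\<^sub>R (1::'a))"
    by (rule exp_add_commuting) simp
  also have "exp (c *\<^sub>R (1::'a)) = exp c *\<^sub>R 1"
    using exp_of_real[of c, where 'a='a] by (simp add: of_real_def)
  finally show ?thesis by simp
qed

lemma norm_exp_minus_one_le:
  fixes X :: "'a::{real_normed_algebra_1,banach}"
  shows "norm (exp X - 1) \<le> exp (norm X) - 1"
proof -
  have sums: "(\<lambda>n. X ^ Suc n /\<^sub>R fact (Suc n)) sums (exp X - 1)"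
    using exp_converges[of X] by (subst sums_Suc_iff) simp
  have sums_norm: "(\<lambda>n. norm X ^ Suc n /\<^sub>R fact (Suc n)) sums (exp (norm X) - 1)"
    using exp_converges[of "norm X"] by (subst sums_Suc_iff) simp
  have le: "norm (X ^ Suc n /\<^sub>R fact (Suc n)) \<le> norm X ^ Suc n /\<^sub>R fact (Suc n)" for n
    using norm_power_ineq[of X "Suc n"] by (simp add: divide_right_mono del: power_Suc)
  have "norm (exp X - 1) = norm (\<Sum>n. X ^ Suc n /\<^sub>R fact (Suc n))"
    by (simp add: sums_unique[OF sums])
  also have "\<dots> \<le> (\<Sum>n. norm X ^ Suc n /\<^sub>R fact (Suc n))"
    by (rule norm_suminf_le[OF le sums_summable[OF sums_norm]])
  also have "\<dots> = exp (norm X) - 1"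
    by (simp add: sums_unique[OF sums_norm])
  finally show ?thesis .
qed

lemma exp_halving_difference_quotient:
  fixes X :: "'a::{real_normed_algebra_1,banach}"
  shows "(\<lambda>j::nat. 2 ^ j *\<^sub>R (exp ((1 / 2 ^ j) *\<^sub>R X) - 1)) \<longlonglongrightarrow> X"
proof -
  have "((\<lambda>t. exp (t *\<^sub>R X)) has_derivative (\<lambda>h. h *\<^sub>R X)) (at 0)"
    using exp_scaleR_has_vector_derivative_right[of X 0] by (simp add: has_vector_derivative_def)
  then have lim0: "((\<lambda>h. norm (exp (h *\<^sub>R X) - 1 - h *\<^sub>R X) / norm h) \<longlongrightarrow> 0) (at 0)"
    unfolding has_derivative_at by simp
  have "filterlim (\<lambda>j::nat. 1 / 2 ^ j :: real) (at 0) sequentially"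
  proof (rule tendsto_imp_filterlim_at_right[THEN filterlim_mono])
    show "(\<lambda>j::nat. 1 / 2 ^ j :: real) \<longlonglongrightarrow> 0"
      by (simp add: LIMSEQ_divide_realpow_zero)
  qed (simp_all add: at_eq_sup_left_right)
  from filterlim_compose[OF lim0 this]
  have "(\<lambda>j::nat. norm (2 ^ j *\<^sub>R (exp ((1 / 2 ^ j) *\<^sub>R X) - 1 - (1 / 2 ^ j) *\<^sub>R X))) \<longlonglongrightarrow> 0"
    by (simp add: divide_inverse mult.commute)
  moreover have "2 ^ j *\<^sub>R (exp ((1 / 2 ^ j) *\<^sub>R X) - 1 - (1 / 2 ^ j) *\<^sub>R X)
      = 2 ^ j *\<^sub>R (exp ((1 / 2 ^ j) *\<^sub>R X) - 1) - X" for j :: nat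
    by (simp add: scaleR_diff_right)
  ultimately have "(\<lambda>j::nat. norm (2 ^ j *\<^sub>R (exp ((1 / 2 ^ j) *\<^sub>R X) - 1) - X)) \<longlonglongrightarrow> 0"
    by simp
  then show ?thesis
    by (rule LIM_zero_cancel[OF tendsto_norm_zero_cancel])
qed

lemma exp_preserves_closed_convex_cone:
  fixes B :: "'a::euclidean_space blinop"
  assumes "closed K" "convex_cone K" "\<And>x. x \<in> K \<Longrightarrow> blinop_apply B x \<in> K" "x \<in> K"
  shows "blinop_apply (exp B) x \<in> K"
proof -
  have "blinop_apply (B ^ k) x \<in> K" for k
    by (induction k) (simp_all add: assms(3,4))
  then have "(\<Sum>k<n. blinop_apply (B ^ k /\<^sub>R fact k) x) \<in> K" for n
    by (induction n) (simp_all add: assms(2) convex_cone_contains_0 convex_cone_add convex_cone_scaleR)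
  moreover have "(\<lambda>n. \<Sum>k<n. blinop_apply (B ^ k /\<^sub>R fact k) x) \<longlonglongrightarrow> blinop_apply (exp B) x"
    using bounded_linear.sums[OF bounded_linear_blinop_apply_left exp_converges] unfolding sums_def .
  ultimately show ?thesis
    by (rule closed_sequentially[OF assms(1)])
qed

section \<open>Square roots near the identity\<close>

definition closed_subalgebra :: "'a::real_normed_algebra_1 set \<Rightarrow> bool" where
  "closed_subalgebra S \<longleftrightarrow> closed S \<and> subspace S \<and> 1 \<in> S \<and> (\<forall>x\<in>S. \<forall>y\<in>S. x * y \<in> S)"

lemma closed_subalgebra_power:
  assumes "closed_subalgebra S" "x \<in> S"
  shows "x ^ k \<in> S"
  using assms by (induction k) (auto simp: closed_subalgebra_def)

definition sqrt_one_plus :: "'a::{real_normed_algebra_1,banach} \<Rightarrow> 'a" where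
  "sqrt_one_plus N = (\<Sum>k. ((1/2::real) gchoose k) *\<^sub>R N ^ k)"

lemma abs_half_gchoose_le: "1 \<le> k \<Longrightarrow> \<bar>(1/2::real) gchoose k\<bar> \<le> 1/2"
proof (induction k rule: dec_induct)
  case base
  then show ?case by simp
next
  case (step k)
  have "real (Suc k) * ((1/2::real) gchoose Suc k) = (1/2 - real k) * ((1/2::real) gchoose k)"
    using gbinomial_mult_1[of "1/2::real" k] by (simp add: algebra_simps)
  then have "real (Suc k) * \<bar>(1/2::real) gchoose Suc k\<bar> = \<bar>1/2 - real k\<bar> * \<bar>(1/2::real) gchoose k\<bar>"
    by (metis abs_mult abs_of_nat)
  also have "\<dots> \<le> real (Suc k) * (1/2)"
    by (rule mult_mono) (use step in auto)
  finally show ?case by (simp del: of_nat_Suc)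
qed

lemma abs_half_gchoose_le_one: "\<bar>(1/2::real) gchoose k\<bar> \<le> 1"
  using abs_half_gchoose_le[of k] by (cases k) auto

lemma half_gchoose_convolution:
  "(\<Sum>i\<le>k. ((1/2::real) gchoose i) * ((1/2) gchoose (k - i))) = (if k \<le> 1 then 1 else 0)"
proof -
  have "(\<Sum>i\<le>k. ((1/2::real) gchoose i) * ((1/2) gchoose (k - i))) = (1::real) gchoose k"
    using gbinomial_Vandermonde[of "1/2::real" "1/2" k] by (simp add: atMost_atLeast0)
  also have "\<dots> = of_nat (1 choose k)"
    using binomial_gbinomial[of 1 k, where 'a=real] by simp
  finally show ?thesis by (cases k) (auto simp: binomial_eq_0)
qed

lemma summable_norm_sqrt_one_plus:
  fixes N :: "'a::{real_normed_algebra_1,banach}"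
  assumes "norm N < 1"
  shows "summable (\<lambda>k. norm (((1/2::real) gchoose k) *\<^sub>R N ^ k))"
proof (rule summable_comparison_test[OF _ summable_geometric[of "norm N"]])
  have "\<bar>(1/2::real) gchoose n\<bar> * norm (N ^ n) \<le> 1 * norm N ^ n" for n
    by (rule mult_mono) (simp_all add: abs_half_gchoose_le_one norm_power_ineq)
  then show "\<exists>M. \<forall>n\<ge>M. norm (norm (((1/2::real) gchoose n) *\<^sub>R N ^ n)) \<le> norm N ^ n"
    by simp
qed (use assms in simp)

lemma sqrt_one_plus_sums:
  fixes N :: "'a::{real_normed_algebra_1,banach}"
  assumes "norm N < 1"
  shows "(\<lambda>k. ((1/2::real) gchoose k) *\<^sub>R N ^ k) sums sqrt_one_plus N"
  unfolding sqrt_one_plus_def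
  by (rule summable_sums[OF summable_norm_cancel[OF summable_norm_sqrt_one_plus[OF assms]]])

lemma sqrt_one_plus_square:
  fixes N :: "'a::{real_normed_algebra_1,banach}"
  assumes "norm N < 1"
  shows "sqrt_one_plus N * sqrt_one_plus N = 1 + N"
proof -
  let ?a = "\<lambda>k. ((1/2::real) gchoose k)"
  have "sqrt_one_plus N * sqrt_one_plus N = (\<Sum>k. \<Sum>i\<le>k. (?a i *\<^sub>R N ^ i) * (?a (k - i) *\<^sub>R N ^ (k - i)))"
    unfolding sqrt_one_plus_def
    by (rule Cauchy_product[OF summable_norm_sqrt_one_plus[OF assms] summable_norm_sqrt_one_plus[OF assms]])
  also have "\<dots> = (\<Sum>k. (if k \<le> 1 then 1 else 0) *\<^sub>R N ^ k)"
  proof -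
    have "(?a i *\<^sub>R N ^ i) * (?a (k - i) *\<^sub>R N ^ (k - i)) = (?a i * ?a (k - i)) *\<^sub>R N ^ k"
      if "i \<le> k" for i k
      using that by (simp flip: power_add)
    then show ?thesis
      by (simp add: scaleR_sum_left[symmetric] half_gchoose_convolution)
  qed
  also have "\<dots> = (\<Sum>k\<in>{0,1}. (if k \<le> 1 then 1 else 0) *\<^sub>R N ^ k)"
    by (rule suminf_finite) auto
  finally show ?thesis by simp
qed

lemma norm_sqrt_one_plus_minus_one_le:
  fixes N :: "'a::{real_normed_algebra_1,banach}"
  assumes "norm N \<le> 1/2"
  shows "norm (sqrt_one_plus N - 1) \<le> 1/2"
proof -
  let ?a = "\<lambda>k. ((1/2::real) gchoose k)"
  have N1: "norm N < 1" using assms by simp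
  have sums: "(\<lambda>k. ?a (Suc k) *\<^sub>R N ^ Suc k) sums (sqrt_one_plus N - 1)"
    using sqrt_one_plus_sums[OF N1] by (subst sums_Suc_iff) simp
  have sums_bound: "(\<lambda>k. (1/2) * norm N ^ Suc k) sums ((1/2) * (norm N / (1 - norm N)))"
    using sums_mult[OF sums_mult[OF geometric_sums[of "norm N"], of "norm N"], of "1/2"] N1
    by simp
  have le: "norm (?a (Suc k) *\<^sub>R N ^ Suc k) \<le> (1/2) * norm N ^ Suc k" for k
    unfolding norm_scaleR using abs_half_gchoose_le[of "Suc k"] norm_power_ineq[of N "Suc k"]
    by (intro mult_mono) simp_all
  have "norm (sqrt_one_plus N - 1) = norm (\<Sum>k. ?a (Suc k) *\<^sub>R N ^ Suc k)"
    by (simp add: sums_unique[OF sums])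
  also have "\<dots> \<le> (\<Sum>k. (1/2) * norm N ^ Suc k)"
    by (rule norm_suminf_le[OF le sums_summable[OF sums_bound]])
  also have "\<dots> = (1/2) * (norm N / (1 - norm N))"
    by (rule sums_unique[OF sums_bound, symmetric])
  also have "\<dots> \<le> 1/2" using assms N1 by (simp add: field_simps)
  finally show ?thesis .
qed

lemma sqrt_one_plus_mem_closed_subalgebra:
  fixes N :: "'a::{real_normed_algebra_1,banach}"
  assumes "norm N < 1" "closed_subalgebra S" "N \<in> S"
  shows "sqrt_one_plus N \<in> S"
proof -
  have "subspace S" "closed S" using assms(2) by (simp_all add: closed_subalgebra_def)
  have "(\<Sum>k<n. ((1/2::real) gchoose k) *\<^sub>R N ^ k) \<in> S" for n
    using closed_subalgebra_power[OF assms(2,3)] \<open>subspace S\<close>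
    by (intro subspace_sum subspace_scale) auto
  then show ?thesis
    using sqrt_one_plus_sums[OF assms(1)] unfolding sums_def
    by (rule closed_sequentially[OF \<open>closed S\<close>])
qed

lemma sqrt_one_plus_commute:
  fixes N :: "'a::{real_normed_algebra_1,banach}"
  assumes "norm N < 1" "Y * N = N * Y"
  shows "Y * sqrt_one_plus N = sqrt_one_plus N * Y"
proof -
  have commute: "Y * N ^ k = N ^ k * Y" for k
    by (induction k) (simp_all add: assms(2) mult.assoc[symmetric], simp add: mult.assoc)
  have "summable (\<lambda>k. ((1/2::real) gchoose k) *\<^sub>R N ^ k)"
    using sqrt_one_plus_sums[OF assms(1)] sums_summable by blast
  from suminf_mult[OF this, of Y] suminf_mult2[OF this, of Y] show ?thesis
    unfolding sqrt_one_plus_def by (simp add: commute)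
qed

lemma blinop_square_root_unique:
  fixes R Y :: "'a::euclidean_space blinop"
  assumes "R * R = Y * Y" "R * Y = Y * R" "norm (R - 1) + norm (Y - 1) < 2"
  shows "R = Y"
proof (rule blinop_eqI)
  fix v
  define w where "w = blinop_apply (R - Y) v"
  have "(R + Y) * (R - Y) = 0"
    using assms(1,2) by (simp add: algebra_simps)
  then have "blinop_apply (R + Y) w = 0"
    unfolding w_def by (metis blinop_apply_mult blinop_apply_zero)
  then have "2 *\<^sub>R w = - (blinop_apply (R - 1) w + blinop_apply (Y - 1) w)"
    by (simp add: algebra_simps scaleR_2)
  then have "2 * norm w = norm (blinop_apply (R - 1) w + blinop_apply (Y - 1) w)"
    using norm_scaleR[of 2 w] by (metis abs_numeral norm_minus_cancel)
  also have "\<dots> \<le> (norm (R - 1) + norm (Y - 1)) * norm w"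
    using norm_triangle_ineq[of "blinop_apply (R - 1) w" "blinop_apply (Y - 1) w"]
      norm_blinop_apply_le[of "R - 1" w] norm_blinop_apply_le[of "Y - 1" w]
    by (simp add: distrib_right)
  finally have "(2 - (norm (R - 1) + norm (Y - 1))) * norm w \<le> 0"
    by (simp add: algebra_simps)
  with assms(3) have "w = 0"
    by (smt (verit) mult_le_0_iff norm_le_zero_iff)
  then show "blinop_apply R v = blinop_apply Y v" unfolding w_def by simp
qed

text \<open>The square root of \<open>exp(X/2\<^sup>j)\<close> close to \<open>1\<close> is unique, so it is both
  \<open>exp(X/2\<^sup>j\<^sup>+\<^sup>1)\<close> and the binomial series in \<open>exp(X/2\<^sup>j) - 1\<close>.\<close>

lemma mem_closed_subalgebra_if_exp_mem:
  fixes X :: "'a::euclidean_space blinop"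
  assumes S: "closed_subalgebra S" and "norm X \<le> 1/4" and "exp X \<in> S"
  shows "X \<in> S"
proof -
  have "closed S" "subspace S" "1 \<in> S" using S by (simp_all add: closed_subalgebra_def)
  have near_one: "norm (exp (c *\<^sub>R X) - 1) \<le> 1/2" if "0 \<le> c" "c \<le> 1" for c :: real
  proof -
    have "norm (c *\<^sub>R X) \<le> norm X"
      using that by (simp add: mult_left_le_one_le)
    then have "norm (c *\<^sub>R X) \<le> 1/4" using assms(2) by linarith
    then have "exp (norm (c *\<^sub>R X)) \<le> 1 + 2 * norm (c *\<^sub>R X)"
      using exp_bound_lemma[of "norm (c *\<^sub>R X)"] by simp
    then show ?thesis
      using norm_exp_minus_one_le[of "c *\<^sub>R X"] \<open>norm (c *\<^sub>R X) \<le> 1/4\<close> by linarith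
  qed
  have halving: "exp ((1 / 2 ^ j) *\<^sub>R X) \<in> S" for j :: nat
  proof (induction j)
    case 0
    then show ?case using assms(3) by simp
  next
    case (Suc j)
    define Y where "Y = exp ((1 / 2 ^ Suc j) *\<^sub>R X)"
    define N where "N = exp ((1 / 2 ^ j) *\<^sub>R X) - 1"
    have "(1 / 2 ^ j) *\<^sub>R X = (1 / 2 ^ Suc j) *\<^sub>R X + (1 / 2 ^ Suc j) *\<^sub>R X"
      by (simp flip: scaleR_add_left)
    then have YY: "Y * Y = 1 + N"
      unfolding Y_def N_def by (simp add: exp_add_commuting[symmetric])
    have "norm N \<le> 1/2" unfolding N_def by (rule near_one) simp_all
    then have N1: "norm N < 1" by simp
    have "N \<in> S" unfolding N_def using Suc.IH \<open>1 \<in> S\<close> \<open>subspace S\<close> by (simp add: subspace_diff)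
    then have "sqrt_one_plus N \<in> S" by (rule sqrt_one_plus_mem_closed_subalgebra[OF N1 S])
    moreover have "sqrt_one_plus N = Y"
    proof (rule blinop_square_root_unique)
      show "sqrt_one_plus N * sqrt_one_plus N = Y * Y"
        using sqrt_one_plus_square[OF N1] YY by simp
      have N_eq: "N = Y * Y - 1" using YY by simp
      have "Y * N = N * Y" unfolding N_eq by (simp add: algebra_simps)
      then show "sqrt_one_plus N * Y = Y * sqrt_one_plus N"
        using sqrt_one_plus_commute[OF N1] by metis
      have "norm (Y - 1) \<le> 1/2"
        unfolding Y_def by (rule near_one) (use one_le_power[of "2::real" "Suc j"] in simp_all)
      then show "norm (sqrt_one_plus N - 1) + norm (Y - 1) < 2"
        using norm_sqrt_one_plus_minus_one_le[OF \<open>norm N \<le> 1/2\<close>] by linarith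
    qed
    ultimately show ?case unfolding Y_def by simp
  qed
  have "\<And>j::nat. 2 ^ j *\<^sub>R (exp ((1 / 2 ^ j) *\<^sub>R X) - 1) \<in> S"
    using halving \<open>1 \<in> S\<close> \<open>subspace S\<close> by (simp add: subspace_diff subspace_scale)
  from closed_sequentially[OF \<open>closed S\<close> this exp_halving_difference_quotient]
  show ?thesis .
qed

section \<open>Invariant subspaces of matrices\<close>

abbreviation mat_invariant :: "real^'n^'n \<Rightarrow> (real^'n::finite) set \<Rightarrow> bool" where
  "mat_invariant A F \<equiv> (\<lambda>x. A *v x) ` F \<subseteq> F"

lemma closed_subalgebra_invariant_blinops:
  fixes G :: "'a::euclidean_space set"
  assumes "subspace G"
  shows "closed_subalgebra {L. \<forall>v\<in>G. blinop_apply L v \<in> G}"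
  unfolding closed_subalgebra_def
proof (intro conjI ballI)
  have "closed ((\<lambda>L. blinop_apply L v) -` G)" for v
    by (intro continuous_closed_vimage closed_subspace assms
        linear_continuous_at bounded_linear_blinop_apply_left)
  then have "closed (\<Inter>v\<in>G. (\<lambda>L. blinop_apply L v) -` G)" by blast
  then show "closed {L. \<forall>v\<in>G. blinop_apply L v \<in> G}"
    by (simp add: vimage_def Collect_ball_eq)
  show "subspace {L. \<forall>v\<in>G. blinop_apply L v \<in> G}"
    using assms by (auto simp: subspace_def)
qed (use assms in auto)

lemma mat_invariant_if_mexp_invariant:
  assumes "subspace G" "norm (blinop_of_matrix C) \<le> 1/4" "mat_invariant (mexp C) G"
  shows "mat_invariant C G"
proof -
  have "exp (blinop_of_matrix C) \<in> {L. \<forall>v\<in>G. blinop_apply L v \<in> G}"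
    using assms(3) by (auto simp: mexp_mult_vector)
  then have "blinop_of_matrix C \<in> {L. \<forall>v\<in>G. blinop_apply L v \<in> G}"
    by (rule mem_closed_subalgebra_if_exp_mem[OF closed_subalgebra_invariant_blinops[OF assms(1)] assms(2)])
  then show ?thesis by auto
qed

lemma convex_mat_invariant:
  assumes "convex F"
  shows "convex {A. mat_invariant A F}"
proof (rule convexI)
  fix A B and u v :: real
  assume "A \<in> {A. mat_invariant A F}" "B \<in> {A. mat_invariant A F}" "0 \<le> u" "0 \<le> v" "u + v = 1"
  then have "u *\<^sub>R (A *v x) + v *\<^sub>R (B *v x) \<in> F" if "x \<in> F" for x
    using that convexD[OF assms] by blast
  then show "u *\<^sub>R A + v *\<^sub>R B \<in> {A. mat_invariant A F}"
    by (auto simp: matrix_vector_mult_add_rdistrib scaleR_matrix_vector_assoc)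
qed

lemma mat_invariant_convex_hull:
  assumes "convex F" "\<And>B. B \<in> S \<Longrightarrow> mat_invariant B F" "A \<in> convex hull S"
  shows "mat_invariant A F"
  using hull_minimal[of S "{A. mat_invariant A F}" convex] convex_mat_invariant[OF assms(1)] assms(2,3)
  by blast

lemma mat_invariant_span: "mat_invariant A F \<Longrightarrow> mat_invariant A (span F)"
  by (metis span_linear_image span_mono matrix_vector_mul_linear)

lemma mat_invariant_add_scalar_iff:
  assumes "subspace G"
  shows "mat_invariant (B + c *\<^sub>R mat 1) G \<longleftrightarrow> mat_invariant B G"
proof -
  have "(B + c *\<^sub>R mat 1) *v v = B *v v + c *\<^sub>R v" for v
    by (simp add: matrix_vector_mult_add_rdistrib flip: scaleR_matrix_vector_assoc)
  then show ?thesis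
    using assms by (auto simp: image_subset_iff subspace_add subspace_scale)
      (metis add_diff_cancel_right' subspace_diff subspace_scale)
qed

section \<open>Invariance along solutions of linear differential equations\<close>

lemma gronwall_zero:
  fixes m :: "real \<Rightarrow> real"
  assumes cont: "continuous_on {0..t} m" and nonneg: "\<And>s. s \<in> {0..t} \<Longrightarrow> 0 \<le> m s"
    and bound: "\<And>s. s \<in> {0..t} \<Longrightarrow> m s \<le> L * integral {0..s} m" and "0 \<le> L"
    and s: "s \<in> {0..t}"
  shows "m s = 0"
proof -
  obtain s0 where "s0 \<in> {0..t}" and max: "\<And>r. r \<in> {0..t} \<Longrightarrow> m r \<le> m s0"
    using continuous_attains_sup[OF compact_Icc _ cont] s by fastforce
  define B where "B = m s0"
  have iterate: "m r \<le> B * (L * r) ^ k / fact k" if "r \<in> {0..t}" for k r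
    using that
  proof (induction k arbitrary: r)
    case 0
    then show ?case using max unfolding B_def by simp
  next
    case (Suc k)
    have sub: "{0..r} \<subseteq> {0..t}" using Suc.prems by auto
    have "((\<lambda>u. B * L ^ k / fact k * u ^ k) has_integral
        B * L ^ k / fact k * (r ^ Suc k / real (Suc k))) {0..r}"
    proof (intro has_integral_mult_right)
      have "((\<lambda>u. u ^ Suc k / real (Suc k)) has_real_derivative
          real (Suc k) * u ^ k / real (Suc k)) (at u within {0..r})" for u
        by (intro derivative_eq_intros) auto
      then have "((\<lambda>u. u ^ Suc k / real (Suc k)) has_vector_derivative u ^ k) (at u within {0..r})" for u
        by (simp add: has_real_derivative_iff_has_vector_derivative del: power_Suc of_nat_Suc)
      then have "((\<lambda>u. u ^ k) has_integral (r ^ Suc k / real (Suc k) - 0 ^ Suc k / real (Suc k))) {0..r}"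
        using Suc.prems by (intro fundamental_theorem_of_calculus) auto
      then show "((\<lambda>u. u ^ k) has_integral (r ^ Suc k / real (Suc k))) {0..r}" by simp
    qed
    then have "integral {0..r} m \<le> B * L ^ k / fact k * (r ^ Suc k / real (Suc k))"
      using Suc.IH sub
      by (intro has_integral_le[OF integrable_integral[OF integrable_continuous_interval
            [OF continuous_on_subset[OF cont sub]]]]) (auto simp: power_mult_distrib mult.assoc)
    from mult_left_mono[OF this \<open>0 \<le> L\<close>] bound[OF Suc.prems]
    show ?case by (simp add: power_mult_distrib field_simps)
  qed
  have "(\<lambda>k. B * ((L * s) ^ k / fact k)) \<longlonglongrightarrow> 0"
    using summable_LIMSEQ_zero[OF summable_exp[of "L * s"]]
    by (intro tendsto_mult_right_zero) (simp add: divide_inverse mult.commute)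
  then have "m s \<le> 0"
    by (rule tendsto_lowerbound) (use iterate s in \<open>simp_all add: always_eventually\<close>)
  then show ?thesis using nonneg[OF s] by simp
qed

lemma projection_along_subspace_exists:
  fixes G :: "'a::euclidean_space set"
  assumes "subspace G"
  obtains q where "linear q" "\<And>v. q v = 0 \<longleftrightarrow> v \<in> G" "\<And>v. v - q v \<in> G"
proof -
  obtain T where T: "T \<subseteq> G" "pairwise orthogonal T" "span T = G"
    using orthogonal_basis_subspace[OF assms] by metis
  define p where "p v = (\<Sum>b\<in>T. (b \<bullet> v / (b \<bullet> b)) *\<^sub>R b)" for v
  have "p v \<in> G" for v
    unfolding p_def using assms T(1) by (intro subspace_sum subspace_scale) auto
  moreover have "orthogonal w (v - p v)" if "w \<in> G" for w v
    unfolding p_def by (rule Gram_Schmidt_step[OF T(2)]) (use that T(3) in simp)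
  ultimately have "v - p v = 0 \<longleftrightarrow> v \<in> G" for v
    using assms by (metis diff_eq_diff_eq diff_self orthogonal_self subspace_diff)
  moreover have "linear (\<lambda>v. v - p v)"
    unfolding p_def
    by (rule linearI) (simp_all add: inner_add_right add_divide_distrib scaleR_add_left
        sum.distrib scaleR_sum_right algebra_simps)
  ultimately show ?thesis using \<open>\<And>v. p v \<in> G\<close> by (intro that[of "\<lambda>v. v - p v"]) auto
qed

lemma integral_equation_zero:
  fixes y g :: "real \<Rightarrow> 'a::banach"
  assumes cont: "continuous_on {0..t} y"
    and integral: "\<And>r. r \<in> {0..t} \<Longrightarrow> (g has_integral y r) {0..r}"
    and bound: "\<And>u. u \<in> {0..t} \<Longrightarrow> norm (g u) \<le> L * norm (y u)" and "0 \<le> L"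
    and s: "s \<in> {0..t}"
  shows "y s = 0"
proof -
  have estimate: "norm (y r) \<le> L * integral {0..r} (\<lambda>u. norm (y u))" if r: "r \<in> {0..t}" for r
  proof -
    have sub: "{0..r} \<subseteq> {0..t}" using r by auto
    have "norm (y r) \<le> integral {0..r} (\<lambda>u. L * norm (y u))"
      unfolding integral_unique[OF integral[OF r], symmetric]
    proof (rule integral_norm_bound_integral[OF has_integral_integrable[OF integral[OF r]]])
      show "(\<lambda>u. L * norm (y u)) integrable_on {0..r}"
        by (intro integrable_continuous_interval continuous_intros continuous_on_subset[OF cont sub])
    qed (use bound sub in blast)
    then show ?thesis by simp
  qed
  have "norm (y s) = 0"
    by (rule gronwall_zero[OF continuous_on_norm[OF cont] _ estimate \<open>0 \<le> L\<close> s]) simp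
  then show ?thesis by simp
qed

text \<open>With \<open>q\<close> a projection whose kernel is \<open>G\<close>, the function \<open>y(r) = q(\<Phi>(r) x)\<close>
  solves a homogeneous integral equation, because \<open>q (\<sigma> w) = q (\<sigma> (q w))\<close>.\<close>

lemma flow_preserves_subspace:
  fixes \<sigma> \<Phi> :: "real \<Rightarrow> real^'n::finite^'n"
  assumes G: "subspace G"
    and invariant: "\<And>s. s \<in> {0..t} \<Longrightarrow> mat_invariant (\<sigma> s) G"
    and bound: "\<And>s. s \<in> {0..t} \<Longrightarrow> norm (blinop_of_matrix (\<sigma> s)) \<le> L"
    and cont: "continuous_on {0..t} \<Phi>"
    and solution: "\<And>s. s \<in> {0..t} \<Longrightarrow> ((\<lambda>r. \<sigma> r ** \<Phi> r) has_integral (\<Phi> s - mat 1)) {0..s}"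
    and "x \<in> G" and s: "s \<in> {0..t}"
  shows "\<Phi> s *v x \<in> G"
proof -
  obtain q where q: "linear q" "\<And>v. q v = 0 \<longleftrightarrow> v \<in> G" "\<And>v. v - q v \<in> G"
    using projection_along_subspace_exists[OF G] by blast
  obtain C where C: "\<And>v. norm (q v) \<le> norm v * C" "C > 0"
    using bounded_linear.pos_bounded[OF q(1)[unfolded linear_conv_bounded_linear]] by blast
  have q_factor: "q (\<sigma> r *v w) = q (\<sigma> r *v q w)" if "r \<in> {0..t}" for r w
  proof -
    have "q (\<sigma> r *v (w - q w)) = 0" using invariant[OF that] q(2,3) by blast
    moreover have "\<sigma> r *v w = \<sigma> r *v q w + \<sigma> r *v (w - q w)"
      by (simp flip: matrix_vector_right_distrib)
    ultimately show ?thesis using linear_add[OF q(1)] by simp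
  qed
  define h where "h M = q (M *v x)" for M :: "real^'n^'n"
  have h: "bounded_linear h"
    unfolding h_def linear_conv_bounded_linear[symmetric]
    by (rule linear_compose[OF _ q(1), unfolded o_def])
      (simp add: linearI matrix_vector_mult_add_rdistrib scaleR_matrix_vector_assoc)
  have "q x = 0" using q(2) \<open>x \<in> G\<close> by blast
  have "h (\<Phi> s) = 0"
  proof (rule integral_equation_zero[where g="\<lambda>u. h (\<sigma> u ** \<Phi> u)" and L="C * L",
        OF bounded_linear.continuous_on[OF h cont] _ _ _ s])
    show "((\<lambda>u. h (\<sigma> u ** \<Phi> u)) has_integral h (\<Phi> r)) {0..r}" if "r \<in> {0..t}" for r
      using has_integral_linear[OF solution[OF that] h] \<open>q x = 0\<close>
      by (simp add: o_def h_def linear_diff[OF q(1)] matrix_vector_mult_diff_rdistrib)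
    show "norm (h (\<sigma> u ** \<Phi> u)) \<le> C * L * norm (h (\<Phi> u))" if u: "u \<in> {0..t}" for u
    proof -
      have "norm (h (\<sigma> u ** \<Phi> u)) = norm (q (\<sigma> u *v h (\<Phi> u)))"
        unfolding h_def using q_factor[OF u] by (simp add: matrix_vector_mul_assoc[symmetric])
      also have "\<dots> \<le> norm (\<sigma> u *v h (\<Phi> u)) * C"
        by (rule C(1))
      also have "\<dots> \<le> norm (blinop_of_matrix (\<sigma> u)) * norm (h (\<Phi> u)) * C"
        using norm_blinop_apply_le[of "blinop_of_matrix (\<sigma> u)" "h (\<Phi> u)"] C(2)
        by (intro mult_right_mono) simp_all
      also have "\<dots> \<le> L * norm (h (\<Phi> u)) * C"
        by (intro mult_right_mono bound[OF u]) (use C(2) in simp_all)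
      finally show ?thesis by (simp add: ac_simps)
    qed
    have "0 \<le> L" using bound[OF s] norm_ge_zero order_trans by blast
    with C(2) show "0 \<le> C * L" by simp
  qed
  then show ?thesis using q(2) unfolding h_def by simp
qed

section \<open>Cones and faces\<close>

lemma convex_cone_if_positively_homogeneous:
  assumes "convex S" "0 \<in> S" "\<And>r x. r > 0 \<Longrightarrow> x \<in> S \<Longrightarrow> r *\<^sub>R x \<in> S"
  shows "convex_cone S"
proof -
  have "c *\<^sub>R x \<in> S" if "x \<in> S" "0 \<le> c" for x c
    using assms(2,3) that by (cases "c = 0") auto
  then show ?thesis using assms(1,2) unfolding convex_cone_def conic_def by blast
qed

lemma proper_cone_convex_cone:
  assumes "proper_cone K"
  shows "convex_cone K"
proof (rule convex_cone_if_positively_homogeneous)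
  obtain x where x: "x \<in> K" using assms unfolding proper_cone_def by blast
  have "closed K" using assms by (simp add: proper_cone_def)
  moreover have "(1 / real (Suc n)) *\<^sub>R x \<in> K" for n
    using assms x by (simp add: proper_cone_def)
  moreover have "(\<lambda>n. (1 / real (Suc n)) *\<^sub>R x) \<longlonglongrightarrow> 0"
    using tendsto_scaleR[OF LIMSEQ_Suc[OF lim_const_over_n] tendsto_const, of 1 x] by simp
  ultimately show "0 \<in> K"
    by (rule closed_sequentially)
qed (use assms in \<open>auto simp: proper_cone_def\<close>)

lemma cone_face_subset: "cone_face K F \<Longrightarrow> F \<subseteq> K"
  by (simp add: cone_face_def)

lemma cone_face_mem: "cone_face K F \<Longrightarrow> x \<in> F \<Longrightarrow> x - y \<in> K \<Longrightarrow> y \<in> K \<Longrightarrow> y \<in> F"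
  by (auto simp: cone_face_def cone_ge_def)

lemma cone_face_convex_cone:
  assumes "proper_cone K" "cone_face K F"
  shows "convex_cone F"
proof (rule convex_cone_if_positively_homogeneous)
  obtain x where "x \<in> F" using assms(2) by (auto simp: cone_face_def)
  then show "0 \<in> F"
    using cone_face_mem[OF assms(2)] cone_face_subset[OF assms(2)]
      convex_cone_contains_0[OF proper_cone_convex_cone[OF assms(1)]] by auto
qed (use assms(2) in \<open>auto simp: cone_face_def\<close>)

lemma span_convex_cone_diff:
  assumes "convex_cone F" "x \<in> span F"
  obtains a b where "a \<in> F" "b \<in> F" "x = a - b"
proof -
  let ?D = "{a - b | a b. a \<in> F \<and> b \<in> F}"
  have F: "0 \<in> F" "\<And>a b. a \<in> F \<Longrightarrow> b \<in> F \<Longrightarrow> a + b \<in> F" "\<And>c a. 0 \<le> c \<Longrightarrow> a \<in> F \<Longrightarrow> c *\<^sub>R a \<in> F"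
    using assms(1) by (simp_all add: convex_cone_contains_0 convex_cone_add convex_cone_scaleR)
  have "subspace ?D"
    unfolding subspace_def
  proof (intro conjI allI ballI)
    show "0 \<in> ?D" using F(1) by force
    show "u + v \<in> ?D" if uv: "u \<in> ?D" "v \<in> ?D" for u v
    proof -
      obtain a b c d where "a \<in> F" "b \<in> F" "c \<in> F" "d \<in> F" "u = a - b" "v = c - d"
        using uv by blast
      then show ?thesis using F(2) by (intro CollectI exI[of _ "a + c"] exI[of _ "b + d"]) auto
    qed
    show "c *\<^sub>R u \<in> ?D" if "u \<in> ?D" for c u
    proof -
      obtain a b where ab: "a \<in> F" "b \<in> F" "u = a - b" using \<open>u \<in> ?D\<close> by blast
      show ?thesis
      proof (cases "0 \<le> c")
        case True
        then have "c *\<^sub>R a \<in> F" "c *\<^sub>R b \<in> F" using ab F(3) by simp_all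
        moreover have "c *\<^sub>R u = c *\<^sub>R a - c *\<^sub>R b" by (simp add: ab(3) algebra_simps)
        ultimately show ?thesis by blast
      next
        case False
        then have "(- c) *\<^sub>R b \<in> F" "(- c) *\<^sub>R a \<in> F" using ab F(3)[of "- c"] by simp_all
        moreover have "c *\<^sub>R u = (- c) *\<^sub>R b - (- c) *\<^sub>R a" by (simp add: ab(3) algebra_simps)
        ultimately show ?thesis by blast
      qed
    qed
  qed
  moreover have "F \<subseteq> ?D" using F(1) by force
  ultimately have "span F \<subseteq> ?D" by (rule span_minimal[rotated])
  then show ?thesis using assms(2) that by blast
qed

lemma cone_face_mem_span:
  assumes "proper_cone K" "cone_face K F" "x \<in> K" "x \<in> span F"
  shows "x \<in> F"
proof -
  obtain a b where "a \<in> F" "b \<in> F" "x = a - b"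
    using span_convex_cone_diff[OF cone_face_convex_cone[OF assms(1,2)] assms(4)] .
  moreover have "b \<in> K" using \<open>b \<in> F\<close> cone_face_subset[OF assms(2)] by blast
  ultimately show ?thesis using cone_face_mem[OF assms(2) _ _ assms(3)] by simp
qed

lemma pi_cone_eq: "pi_cone K = {A. mat_invariant A K}"
  by (auto simp: pi_cone_def)

lemma convex_pi_cone: "convex K \<Longrightarrow> convex (pi_cone K)"
  unfolding pi_cone_eq by (rule convex_mat_invariant)

lemma mat_invariant_span_iff:
  assumes "proper_cone K" "cone_face K F" "A \<in> pi_cone K"
  shows "mat_invariant A (span F) \<longleftrightarrow> mat_invariant A F"
proof
  assume "mat_invariant A (span F)"
  moreover have "mat_invariant A K" using assms(3) by (simp add: pi_cone_eq)
  ultimately show "mat_invariant A F"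
    using cone_face_subset[OF assms(2)] cone_face_mem_span[OF assms(1,2)] span_base by blast
qed (rule mat_invariant_span)

lemma face_invariant_of_positive_combination:
  assumes K: "proper_cone K" and F: "cone_face K F"
    and "B \<in> pi_cone K" "C \<in> pi_cone K" "0 < l" "0 \<le> \<mu>"
    and "mat_invariant (l *\<^sub>R B + \<mu> *\<^sub>R C) F"
  shows "mat_invariant B F"
proof clarify
  fix x assume "x \<in> F"
  have K': "convex_cone K" by (rule proper_cone_convex_cone[OF K])
  have "B *v x \<in> K" "C *v x \<in> K"
    using assms(3,4) \<open>x \<in> F\<close> cone_face_subset[OF F] by (auto simp: pi_cone_def)
  have "l *\<^sub>R (B *v x) + \<mu> *\<^sub>R (C *v x) \<in> F"
    using assms(7) \<open>x \<in> F\<close>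
    by (auto simp: matrix_vector_mult_add_rdistrib scaleR_matrix_vector_assoc)
  then have "l *\<^sub>R (B *v x) \<in> F"
    by (rule cone_face_mem[OF F]) (use K' assms(5,6) \<open>B *v x \<in> K\<close> \<open>C *v x \<in> K\<close> in
        \<open>simp_all add: convex_cone_scaleR\<close>)
  with convex_cone_scaleR[OF cone_face_convex_cone[OF K F], of "1 / l"] assms(5)
  have "(1 / l) *\<^sub>R (l *\<^sub>R (B *v x)) \<in> F" by (simp del: scaleR_scaleR)
  then show "B *v x \<in> F" using assms(5) by simp
qed

section \<open>Relative interior points of sets of matrices\<close>

definition pi_cone_plus_scalars :: "(real^'n) set \<Rightarrow> (real^'n^'n::finite) set" where
  "pi_cone_plus_scalars K = {B + c *\<^sub>R mat 1 | B c. B \<in> pi_cone K}"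

lemma pi_cone_subset_plus_scalars: "pi_cone K \<subseteq> pi_cone_plus_scalars K"
  unfolding pi_cone_plus_scalars_def by (force intro: exI[where x=0])

lemma convex_pi_cone_plus_scalars:
  assumes "convex K"
  shows "convex (pi_cone_plus_scalars K)"
proof (rule convexI)
  fix x y :: "real^'a^'a" and u v :: real
  assume "x \<in> pi_cone_plus_scalars K" "y \<in> pi_cone_plus_scalars K" and uv: "0 \<le> u" "0 \<le> v" "u + v = 1"
  then obtain B1 c1 B2 c2 where x: "x = B1 + c1 *\<^sub>R mat 1" "B1 \<in> pi_cone K"
    and y: "y = B2 + c2 *\<^sub>R mat 1" "B2 \<in> pi_cone K"
    unfolding pi_cone_plus_scalars_def by blast
  have "u *\<^sub>R B1 + v *\<^sub>R B2 \<in> pi_cone K"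
    by (rule convexD[OF convex_pi_cone[OF assms] x(2) y(2) uv])
  moreover have "u *\<^sub>R x + v *\<^sub>R y = (u *\<^sub>R B1 + v *\<^sub>R B2) + (u * c1 + v * c2) *\<^sub>R mat 1"
    unfolding x y by (simp add: algebra_simps)
  ultimately show "u *\<^sub>R x + v *\<^sub>R y \<in> pi_cone_plus_scalars K"
    unfolding pi_cone_plus_scalars_def by blast
qed

lemma exp_K_nonneg_if_pi_cone_plus_scalars:
  assumes K: "proper_cone K" and "A \<in> pi_cone_plus_scalars K"
  shows "exp_K_nonneg K A"
  unfolding exp_K_nonneg_def
proof (intro allI impI ballI)
  fix t :: real and x assume "0 \<le> t" "x \<in> K"
  obtain B c where A: "A = B + c *\<^sub>R mat 1" and "B \<in> pi_cone K"
    using assms(2) unfolding pi_cone_plus_scalars_def by blast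
  have cone: "convex_cone K" "closed K"
    using proper_cone_convex_cone[OF K] K by (simp_all add: proper_cone_def)
  have "blinop_of_matrix (t *\<^sub>R A) = t *\<^sub>R blinop_of_matrix B + (t * c) *\<^sub>R 1"
    by (simp add: A blinop_of_matrix_scaleR blinop_of_matrix_add blinop_of_matrix_one scaleR_add_right)
  then have "mexp (t *\<^sub>R A) *v x = exp (t * c) *\<^sub>R blinop_apply (exp (t *\<^sub>R blinop_of_matrix B)) x"
    by (simp add: mexp_mult_vector exp_add_scaleR_one)
  moreover have "blinop_apply (exp (t *\<^sub>R blinop_of_matrix B)) x \<in> K"
    using \<open>B \<in> pi_cone K\<close> \<open>0 \<le> t\<close> \<open>x \<in> K\<close>
    by (intro exp_preserves_closed_convex_cone[OF cone(2,1)])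
      (auto simp: pi_cone_def convex_cone_scaleR[OF cone(1)])
  ultimately show "mexp (t *\<^sub>R A) *v x \<in> K"
    using convex_cone_scaleR[OF cone(1)] by simp
qed

lemma rel_interior_convex_split:
  fixes T :: "'a::euclidean_space set"
  assumes "convex T" "A \<in> rel_interior T" "B \<in> T"
  obtains l C where "0 < l" "l < 1" "C \<in> T" "A = l *\<^sub>R B + (1 - l) *\<^sub>R C"
proof -
  obtain e where "e > 1" and C: "(1 - e) *\<^sub>R B + e *\<^sub>R A \<in> T"
    using convex_rel_interior_iff[OF assms(1)] assms by blast
  have "A = (1 - 1 / e) *\<^sub>R B + (1 - (1 - 1 / e)) *\<^sub>R ((1 - e) *\<^sub>R B + e *\<^sub>R A)"
    using \<open>e > 1\<close> by (simp add: algebra_simps)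
  moreover have "0 < 1 - 1 / e" "1 - 1 / e < 1" using \<open>e > 1\<close> by simp_all
  ultimately show ?thesis using C that by blast
qed

lemma mat_invariant_span_of_rel_interior:
  assumes K: "proper_cone K" and F: "cone_face K F"
    and T: "convex T" "T \<subseteq> pi_cone_plus_scalars K"
    and "A \<in> rel_interior T" "mat_invariant A (span F)" "B \<in> T"
  shows "mat_invariant B (span F)"
proof -
  obtain l C where "0 < l" "l < 1" "C \<in> T" and A: "A = l *\<^sub>R B + (1 - l) *\<^sub>R C"
    using rel_interior_convex_split[OF T(1) assms(5,7)] .
  obtain B1 c1 B2 c2 where B: "B = B1 + c1 *\<^sub>R mat 1" "B1 \<in> pi_cone K"
    and C: "C = B2 + c2 *\<^sub>R mat 1" "B2 \<in> pi_cone K"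
    using T(2) \<open>C \<in> T\<close> assms(7) unfolding pi_cone_plus_scalars_def by blast
  define D where "D = l *\<^sub>R B1 + (1 - l) *\<^sub>R B2"
  have "convex K" using K by (simp add: proper_cone_def)
  have "D \<in> pi_cone K"
    unfolding D_def using \<open>0 < l\<close> \<open>l < 1\<close>
    by (intro convexD[OF convex_pi_cone[OF \<open>convex K\<close>] B(2) C(2)]) simp_all
  have "A = D + (l * c1 + (1 - l) * c2) *\<^sub>R mat 1"
    unfolding A B(1) C(1) D_def by (simp add: algebra_simps)
  with assms(6) have "mat_invariant D (span F)"
    by (simp add: mat_invariant_add_scalar_iff subspace_span)
  then have "mat_invariant D F" using mat_invariant_span_iff[OF K F \<open>D \<in> pi_cone K\<close>] by blast
  then have "mat_invariant B1 F"
    using face_invariant_of_positive_combination[OF K F B(2) C(2) \<open>0 < l\<close>, of "1 - l"] \<open>l < 1\<close>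
    unfolding D_def by simp
  then show ?thesis
    unfolding B(1) by (simp add: mat_invariant_add_scalar_iff subspace_span mat_invariant_span)
qed

lemma convex_hull_subset_pi_cone:
  assumes "proper_cone K" "S \<subseteq> pi_cone K"
  shows "convex hull S \<subseteq> pi_cone K"
  using assms(1) by (intro hull_minimal[OF assms(2)] convex_pi_cone) (simp add: proper_cone_def)

lemma rel_interior_convex_hull_nonempty:
  fixes S :: "'a::euclidean_space set"
  assumes "S \<noteq> {}"
  obtains A where "A \<in> rel_interior (convex hull S)"
proof -
  have "rel_interior (convex hull S) \<noteq> {}"
    using rel_interior_eq_empty[OF convex_convex_hull[of S]] convex_hull_eq_empty[of S] assms by blast
  then show thesis using that by blast
qed

lemma convex_hull_has_irreducible_iff:
  assumes K: "proper_cone K" and S: "S \<subseteq> pi_cone K" "S \<noteq> {}"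
  shows "(\<exists>A\<in>convex hull S. K_irreducible K A) \<longleftrightarrow>
    (\<forall>F. nontrivial_face K F \<longrightarrow> (\<exists>B\<in>S. \<not> mat_invariant B F))"
proof
  assume "\<exists>A\<in>convex hull S. K_irreducible K A"
  then obtain A where A: "A \<in> convex hull S" "K_irreducible K A" by blast
  show "\<forall>F. nontrivial_face K F \<longrightarrow> (\<exists>B\<in>S. \<not> mat_invariant B F)"
  proof (intro allI impI)
    fix F assume "nontrivial_face K F"
    then have "convex F" "\<not> mat_invariant A F"
      using A(2) by (auto simp: K_irreducible_def nontrivial_face_def cone_face_def)
    then show "\<exists>B\<in>S. \<not> mat_invariant B F"
      using mat_invariant_convex_hull[OF _ _ A(1)] by blast
  qed
next
  assume no_common: "\<forall>F. nontrivial_face K F \<longrightarrow> (\<exists>B\<in>S. \<not> mat_invariant B F)"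
  obtain A where A: "A \<in> rel_interior (convex hull S)"
    using rel_interior_convex_hull_nonempty[OF S(2)] .
  have hull: "convex hull S \<subseteq> pi_cone K"
    by (rule convex_hull_subset_pi_cone[OF K S(1)])
  have "\<not> mat_invariant A F" if "nontrivial_face K F" for F
  proof
    assume "mat_invariant A F"
    have F: "cone_face K F" using that by (simp add: nontrivial_face_def)
    have "mat_invariant B F" if "B \<in> S" for B
    proof -
      have "mat_invariant A (span F)" by (rule mat_invariant_span) fact
      moreover have "convex hull S \<subseteq> pi_cone_plus_scalars K"
        using hull pi_cone_subset_plus_scalars by blast
      ultimately have "mat_invariant B (span F)"
        using mat_invariant_span_of_rel_interior[OF K F convex_convex_hull _ A] hull_inc[OF \<open>B \<in> S\<close>]
        by blast
      then show ?thesis using mat_invariant_span_iff[OF K F] S(1) \<open>B \<in> S\<close> by blast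
    qed
    then show False using no_common that by blast
  qed
  then show "\<exists>A\<in>convex hull S. K_irreducible K A"
    using A hull rel_interior_subset unfolding K_irreducible_def by blast
qed

section \<open>The discrete semigroup\<close>

lemma dsg_step_one [simp]: "dsg_step M (Suc 0) = M"
  by auto

lemma dsg_step_mat_invariant:
  assumes "\<And>B. B \<in> M \<Longrightarrow> mat_invariant B F" "X \<in> dsg_step M t"
  shows "mat_invariant X F"
  using assms(2)
proof (induction t arbitrary: X)
  case 0
  then show ?case by simp
next
  case (Suc t)
  then obtain A B where "X = A ** B" "A \<in> M" "B \<in> dsg_step M t" by auto
  then show ?case
    using Suc.IH assms(1) by (fastforce simp: matrix_vector_mul_assoc[symmetric])
qed

theorem dsg_irreducible_iff:
  assumes K: "proper_cone K" and "M \<noteq> {}" and "dsg M \<subseteq> pi_cone K"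
  shows "dsg_irreducible K M \<longleftrightarrow> (\<exists>A\<in>convex hull M. K_irreducible K A)"
proof -
  have step: "dsg_step M t \<subseteq> pi_cone K" "dsg_step M t \<noteq> {}" for t
    using assms(3) unfolding dsg_def apply blast
    by (induction t) (use \<open>M \<noteq> {}\<close> in auto)
  have "dsg_irreducible K M \<longleftrightarrow>
      (\<exists>t>0. \<forall>F. nontrivial_face K F \<longrightarrow> (\<exists>X\<in>dsg_step M t. \<not> mat_invariant X F))"
    unfolding dsg_irreducible_def by (simp add: convex_hull_has_irreducible_iff[OF K step])
  also have "\<dots> \<longleftrightarrow> (\<forall>F. nontrivial_face K F \<longrightarrow> (\<exists>B\<in>M. \<not> mat_invariant B F))"
  proof
    assume "\<exists>t>0. \<forall>F. nontrivial_face K F \<longrightarrow> (\<exists>X\<in>dsg_step M t. \<not> mat_invariant X F)"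
    then show "\<forall>F. nontrivial_face K F \<longrightarrow> (\<exists>B\<in>M. \<not> mat_invariant B F)"
      using dsg_step_mat_invariant by blast
  next
    assume "\<forall>F. nontrivial_face K F \<longrightarrow> (\<exists>B\<in>M. \<not> mat_invariant B F)"
    then show "\<exists>t>0. \<forall>F. nontrivial_face K F \<longrightarrow> (\<exists>X\<in>dsg_step M t. \<not> mat_invariant X F)"
      by (intro exI[of _ 1]) simp
  qed
  also have "\<dots> \<longleftrightarrow> (\<exists>A\<in>convex hull M. K_irreducible K A)"
    using convex_hull_has_irreducible_iff[OF K step(1,2)[of 1]] by simp
  finally show ?thesis .
qed

section \<open>The continuous semigroup\<close>

lemma mexp_mem_csg_step:
  assumes "C \<in> M"
  shows "mexp (t *\<^sub>R C) \<in> csg_step M t"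
proof -
  have "((\<lambda>r. C ** mexp (r *\<^sub>R C)) has_integral (mexp (s *\<^sub>R C) - mat 1)) {0..s}"
    if "s \<in> {0..t}" for s
    using fundamental_theorem_of_calculus[of 0 s "\<lambda>r. mexp (r *\<^sub>R C)" "\<lambda>r. C ** mexp (r *\<^sub>R C)"]
      that by (simp add: mexp_zero has_vector_derivative_mexp)
  moreover have "continuous_on {0..t} (\<lambda>s. mexp (s *\<^sub>R C))"
    by (rule continuous_on_vector_derivative[OF has_vector_derivative_mexp])
  moreover have "(\<lambda>s. C) measurable_on {0..t}" by simp
  ultimately show ?thesis
    unfolding csg_step_def
    by (intro CollectI exI[of _ "\<lambda>s. C"] exI[of _ "\<lambda>s. mexp (s *\<^sub>R C)"] conjI refl)
      (use assms in auto)
qed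

lemma csg_step_mat_invariant:
  assumes "subspace G" "bounded M" "\<And>C. C \<in> M \<Longrightarrow> mat_invariant C G"
    and "0 \<le> t" "X \<in> csg_step M t"
  shows "mat_invariant X G"
proof -
  obtain L where L: "\<And>C. C \<in> M \<Longrightarrow> norm (blinop_of_matrix C) \<le> L"
    using bounded_matrices_operator_norm_bound[OF assms(2)] by blast
  obtain \<sigma> \<Phi> where "X = \<Phi> t" "\<forall>s\<in>{0..t}. \<sigma> s \<in> M" "continuous_on {0..t} \<Phi>"
    "\<forall>s\<in>{0..t}. ((\<lambda>r. \<sigma> r ** \<Phi> r) has_integral (\<Phi> s - mat 1)) {0..s}"
    using assms(5) unfolding csg_step_def by blast
  then show ?thesis
    using flow_preserves_subspace[OF assms(1), of t \<sigma> L \<Phi>] assms(3,4) L by auto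
qed

lemma mat_invariant_scaleR: "subspace G \<Longrightarrow> mat_invariant A G \<Longrightarrow> mat_invariant (c *\<^sub>R A) G"
  by (auto simp: subspace_scale simp flip: scaleR_matrix_vector_assoc)

theorem csg_irreducible_iff:
  assumes K: "proper_cone K" and "compact M" "M \<noteq> {}" "csg M \<subseteq> pi_cone K"
  shows "csg_irreducible K M \<longleftrightarrow>
    (\<forall>F. nontrivial_face K F \<longrightarrow> (\<exists>A\<in>M. \<not> mat_invariant A (span F)))"
proof -
  have step: "csg_step M t \<subseteq> pi_cone K" "csg_step M t \<noteq> {}" if "0 \<le> t" for t
  proof -
    show "csg_step M t \<subseteq> pi_cone K" using assms(4) that unfolding csg_def by auto
    obtain C where "C \<in> M" using assms(3) by blast
    then show "csg_step M t \<noteq> {}" using mexp_mem_csg_step by blast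
  qed
  have "csg_irreducible K M \<longleftrightarrow>
      (\<exists>t>0. \<forall>F. nontrivial_face K F \<longrightarrow> (\<exists>X\<in>csg_step M t. \<not> mat_invariant X F))"
    unfolding csg_irreducible_def
    by (rule ex_cong1, rule conj_cong, rule refl,
        rule convex_hull_has_irreducible_iff[OF K step[OF less_imp_le]])
  also have "\<dots> \<longleftrightarrow> (\<forall>F. nontrivial_face K F \<longrightarrow> (\<exists>A\<in>M. \<not> mat_invariant A (span F)))"
  proof
    assume "\<exists>t>0. \<forall>F. nontrivial_face K F \<longrightarrow> (\<exists>X\<in>csg_step M t. \<not> mat_invariant X F)"
    then obtain t where "t > 0"
      and moves: "\<forall>F. nontrivial_face K F \<longrightarrow> (\<exists>X\<in>csg_step M t. \<not> mat_invariant X F)" by auto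
    show "\<forall>F. nontrivial_face K F \<longrightarrow> (\<exists>A\<in>M. \<not> mat_invariant A (span F))"
    proof (intro allI impI, rule ccontr)
      fix F assume F: "nontrivial_face K F" and all_invariant: "\<not> (\<exists>A\<in>M. \<not> mat_invariant A (span F))"
      have span_invariant: "mat_invariant X (span F)" if "X \<in> csg_step M t" for X
        by (rule csg_step_mat_invariant[OF subspace_span compact_imp_bounded[OF assms(2)] _
              less_imp_le[OF \<open>t > 0\<close>] that]) (use all_invariant in blast)
      obtain X where X: "X \<in> csg_step M t" "\<not> mat_invariant X F" using moves F by blast
      then have "X \<in> pi_cone K" using step(1)[OF less_imp_le[OF \<open>t > 0\<close>]] by blast
      with X span_invariant show False
        using mat_invariant_span_iff[OF K] F unfolding nontrivial_face_def by blast
    qed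
  next
    assume moves: "\<forall>F. nontrivial_face K F \<longrightarrow> (\<exists>A\<in>M. \<not> mat_invariant A (span F))"
    obtain L where "L > 0" and L: "\<And>C. C \<in> M \<Longrightarrow> norm (blinop_of_matrix C) \<le> L"
      using bounded_matrices_operator_norm_bound[OF compact_imp_bounded[OF assms(2)]] by blast
    define t where "t = 1 / (4 * L)"
    have "t > 0" using \<open>L > 0\<close> by (simp add: t_def)
    have "\<exists>X\<in>csg_step M t. \<not> mat_invariant X F" if F: "nontrivial_face K F" for F
    proof -
      obtain C where "C \<in> M" and C: "\<not> mat_invariant C (span F)" using moves F by blast
      have "norm (blinop_of_matrix (t *\<^sub>R C)) = t * norm (blinop_of_matrix C)"
        using \<open>t > 0\<close> by (simp add: blinop_of_matrix_scaleR)
      also have "\<dots> \<le> t * L" using L[OF \<open>C \<in> M\<close>] \<open>t > 0\<close> by simp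
      also have "\<dots> = 1/4" using \<open>L > 0\<close> by (simp add: t_def)
      finally have small: "norm (blinop_of_matrix (t *\<^sub>R C)) \<le> 1/4" .
      have "\<not> mat_invariant (mexp (t *\<^sub>R C)) F"
      proof
        assume "mat_invariant (mexp (t *\<^sub>R C)) F"
        then have "mat_invariant (mexp (t *\<^sub>R C)) (span F)" by (rule mat_invariant_span)
        then have "mat_invariant (t *\<^sub>R C) (span F)"
          by (rule mat_invariant_if_mexp_invariant[OF subspace_span small])
        then have "mat_invariant ((1 / t) *\<^sub>R (t *\<^sub>R C)) (span F)"
          by (rule mat_invariant_scaleR[OF subspace_span])
        then show False using C \<open>t > 0\<close> by simp
      qed
      then show ?thesis using mexp_mem_csg_step[OF \<open>C \<in> M\<close>] by blast
    qed
    with \<open>t > 0\<close> show "\<exists>t>0. \<forall>F. nontrivial_face K F \<longrightarrow> (\<exists>X\<in>csg_step M t. \<not> mat_invariant X F)"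
      by blast
  qed
  finally show ?thesis .
qed

theorem exists_exp_K_nonneg_irreducible_iff:
  assumes K: "proper_cone K" and "M \<noteq> {}" and "M \<subseteq> pi_cone_plus_scalars K"
  shows "(\<forall>F. nontrivial_face K F \<longrightarrow> (\<exists>A\<in>M. \<not> mat_invariant A (span F))) \<longleftrightarrow>
    (\<exists>A\<in>convex hull M. exp_K_nonneg K A \<and>
       (\<forall>F. nontrivial_face K F \<longrightarrow> \<not> mat_invariant A (span F)))"
proof
  assume moves: "\<forall>F. nontrivial_face K F \<longrightarrow> (\<exists>A\<in>M. \<not> mat_invariant A (span F))"
  have hull: "convex hull M \<subseteq> pi_cone_plus_scalars K"
    using assms(3) K by (intro hull_minimal convex_pi_cone_plus_scalars) (auto simp: proper_cone_def)
  obtain A where A: "A \<in> rel_interior (convex hull M)"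
    using rel_interior_convex_hull_nonempty[OF assms(2)] .
  then have "A \<in> convex hull M" using rel_interior_subset by blast
  moreover have "\<not> mat_invariant A (span F)" if "nontrivial_face K F" for F
  proof
    assume "mat_invariant A (span F)"
    then have "mat_invariant B (span F)" if "B \<in> M" for B
      using \<open>nontrivial_face K F\<close> mat_invariant_span_of_rel_interior[OF K _ convex_convex_hull hull A]
        hull_inc[OF \<open>B \<in> M\<close>] unfolding nontrivial_face_def by blast
    then show False using moves that by blast
  qed
  ultimately show "\<exists>A\<in>convex hull M. exp_K_nonneg K A \<and>
      (\<forall>F. nontrivial_face K F \<longrightarrow> \<not> mat_invariant A (span F))"
    using exp_K_nonneg_if_pi_cone_plus_scalars[OF K] hull by blast
next
  assume "\<exists>A\<in>convex hull M. exp_K_nonneg K A \<and>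
      (\<forall>F. nontrivial_face K F \<longrightarrow> \<not> mat_invariant A (span F))"
  then show "\<forall>F. nontrivial_face K F \<longrightarrow> (\<exists>A\<in>M. \<not> mat_invariant A (span F))"
    using mat_invariant_convex_hull[OF subspace_imp_convex[OF subspace_span]] by blast
qed

theorem mainTheorem5:
  fixes K :: "(real ^ 'n) set" and M :: "(real ^ 'n ^ 'n) set"
  assumes "proper_cone K" and "compact M" and "M \<noteq> {}"
  shows "(dsg M \<subseteq> pi_cone K \<longrightarrow>
            (dsg_irreducible K M \<longleftrightarrow> (\<exists>A\<in>convex hull M. K_irreducible K A)))
       \<and> (csg M \<subseteq> pi_cone K \<longrightarrow>
            ((csg_irreducible K M \<longleftrightarrow>
                (\<forall>F. nontrivial_face K F \<longrightarrow> (\<exists>A\<in>M. \<not> (\<lambda>x. A *v x) ` span F \<subseteq> span F)))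
             \<and> (M \<subseteq> {B + c *\<^sub>R mat 1 | B c. B \<in> pi_cone K} \<longrightarrow>
                 ((\<forall>F. nontrivial_face K F \<longrightarrow> (\<exists>A\<in>M. \<not> (\<lambda>x. A *v x) ` span F \<subseteq> span F))
                  \<longleftrightarrow> (\<exists>A\<in>convex hull M. exp_K_nonneg K A \<and>
                        (\<forall>F. nontrivial_face K F \<longrightarrow> \<not> (\<lambda>x. A *v x) ` span F \<subseteq> span F))))))"
  by (intro conjI impI)
    (erule dsg_irreducible_iff[OF assms(1,3)] csg_irreducible_iff[OF assms]
      exists_exp_K_nonneg_irreducible_iff[OF assms(1,3), unfolded pi_cone_plus_scalars_def])+

end
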